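(* Let $(\mathcal{M}^4,g)$ be a mixed super quasi-Einstein spacetime (notation as in the context) satisfying Einstein's field equation without cosmological constant, $\mathrm{Ric}-\frac{r}{2}g=\kappa T$ with $\kappa\neq0$ constant. If the space-matter tensor $P$ is divergence-free, then the energy density $\sigma$ is constant.
   Context: A mixed super quasi-Einstein spacetime is a 4-dimensional Lorentzian manifold $(\mathcal{M}^4,g)$ with Levi-Civita connection $\nabla$, curvature $R(X,Y)Z=\nabla_X\nabla_YZ-\nabla_Y\nabla_XZ-\nabla_{[X,Y]}Z$, $R(X,Y,Z,W)=g(R(X,Y)Z,W)$, Ricci tensor $\mathrm{Ric}$ (not identically zero) and scalar curvature $r$, such that $\mathrm{Ric}(X,Y)=\Psi_1 g(X,Y)+\Psi_2\mathcal{A}(X)\mathcal{A}(Y)+\Psi_3\mathcal{B}(X)\mathcal{B}(Y)+\Psi_4(\mathcal{A}(X)\mathcal{B}(Y)+\mathcal{B}(X)\mathcal{A}(Y))+\Psi_5\mathcal{D}(X,Y)$, where $\Psi_i$ are smooth functions with $\Psi_2,\Psi_3,\Psi_4,\Psi_5\neq0$; $\xi_1,\xi_2$ are vector fields with $g(\xi_1,\xi_1)=-1$, $g(\xi_2,\xi_2)=1$, $g(\xi_1,\xi_2)=0$; $\mathcal{A}=g(\cdot,\xi_1)$, $\mathcal{B}=g(\cdot,\xi_2)$; $\mathcal{D}$ is a symmetric trace-free $(0,2)$-tensor with $\mathcal{D}(X,\xi_1)=0$. The space-matter tensor is $P=R+\frac{\kappa}{2}\,g\wedge T-\sigma G$,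 where $\sigma$ is the energy density function, $(g\wedge T)(X,Y,Z,W)=g(X,W)T(Y,Z)+g(Y,Z)T(X,W)-g(X,Z)T(Y,W)-g(Y,W)T(X,Z)$ and $G(X,Y,Z,W)=g(X,W)g(Y,Z)-g(X,Z)g(Y,W)$. $P$ is divergence-free if $\sum_i\varepsilon_i(\nabla_{e_i}P)(X,Y,Z,e_i)=0$ for all $X,Y,Z$, with $\{e_i\}$ a local orthonormal frame and $\varepsilon_i=g(e_i,e_i)$. *)

theory Defs
  imports "HOL-Analysis.Analysis"
begin

text \<open>Local coordinate model of a 4-dimensional Lorentzian manifold: an open connected
  set U of real^4 with metric components g x $ a $ b.  Tensor fields are given by
  their coordinate components, point first, then indices.\<close>

type_synonym pt = "real^4"

definition pd :: "4 \<Rightarrow> (pt \<Rightarrow> real) \<Rightarrow> pt \<Rightarrow> real" where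
  "pd i f x = frechet_derivative f (at x) (axis i 1)"

fun C_k :: "nat \<Rightarrow> pt set \<Rightarrow> (pt \<Rightarrow> real) \<Rightarrow> bool" where
  "C_k 0 U f = continuous_on U f"
| "C_k (Suc n) U f = (f differentiable_on U \<and> (\<forall>i. C_k n U (pd i f)))"

definition smooth_on :: "pt set \<Rightarrow> (pt \<Rightarrow> real) \<Rightarrow> bool" where
  "smooth_on U f = (\<forall>n. C_k n U f)"

definition gform :: "(pt \<Rightarrow> real^4^4) \<Rightarrow> pt \<Rightarrow> real^4 \<Rightarrow> real^4 \<Rightarrow> real" where
  "gform g x X Y = (\<Sum>a\<in>UNIV. \<Sum>b\<in>UNIV. X $ a * Y $ b * g x $ a $ b)"

definition ginv :: "(pt \<Rightarrow> real^4^4) \<Rightarrow> pt \<Rightarrow> real^4^4" where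
  "ginv g x = matrix_inv (g x)"

definition lorentzian_on :: "pt set \<Rightarrow> (pt \<Rightarrow> real^4^4) \<Rightarrow> bool" where
  "lorentzian_on U g \<longleftrightarrow>
     (\<forall>a b. smooth_on U (\<lambda>y. g y $ a $ b)) \<and>
     (\<forall>x\<in>U. (\<forall>a b. g x $ a $ b = g x $ b $ a) \<and>
        (\<exists>e :: 4 \<Rightarrow> real^4. \<forall>a b. gform g x (e a) (e b) =
            (if a = b then (if a = 0 then -1 else 1) else 0)))"

definition christoffel :: "(pt \<Rightarrow> real^4^4) \<Rightarrow> pt \<Rightarrow> 4 \<Rightarrow> 4 \<Rightarrow> 4 \<Rightarrow> real" where
  "christoffel g x k i j = (1/2) * (\<Sum>l\<in>UNIV. ginv g x $ k $ l *
      (pd i (\<lambda>y. g y $ j $ l) x + pd j (\<lambda>y. g y $ i $ l) x - pd l (\<lambda>y. g y $ i $ j) x))"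

text \<open>R(d_i,d_j)d_k = sum_l riem_up g x l i j k d_l, with
  R(X,Y)Z = nabla_X nabla_Y Z - nabla_Y nabla_X Z - nabla_[X,Y] Z.\<close>
definition riem_up :: "(pt \<Rightarrow> real^4^4) \<Rightarrow> pt \<Rightarrow> 4 \<Rightarrow> 4 \<Rightarrow> 4 \<Rightarrow> 4 \<Rightarrow> real" where
  "riem_up g x l i j k =
     pd i (\<lambda>y. christoffel g y l j k) x - pd j (\<lambda>y. christoffel g y l i k) x
     + (\<Sum>m\<in>UNIV. christoffel g x l i m * christoffel g x m j k
                  - christoffel g x l j m * christoffel g x m i k)"

definition riem :: "(pt \<Rightarrow> real^4^4) \<Rightarrow> pt \<Rightarrow> 4 \<Rightarrow> 4 \<Rightarrow> 4 \<Rightarrow> 4 \<Rightarrow> real" where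
  "riem g x i j k w = (\<Sum>l\<in>UNIV. riem_up g x l i j k * g x $ l $ w)"

definition ricci :: "(pt \<Rightarrow> real^4^4) \<Rightarrow> pt \<Rightarrow> 4 \<Rightarrow> 4 \<Rightarrow> real" where
  "ricci g x j k = (\<Sum>i\<in>UNIV. riem_up g x i i j k)"

definition scal :: "(pt \<Rightarrow> real^4^4) \<Rightarrow> pt \<Rightarrow> real" where
  "scal g x = (\<Sum>j\<in>UNIV. \<Sum>k\<in>UNIV. ginv g x $ j $ k * ricci g x j k)"

definition cov4 :: "(pt \<Rightarrow> real^4^4) \<Rightarrow> (pt \<Rightarrow> 4 \<Rightarrow> 4 \<Rightarrow> 4 \<Rightarrow> 4 \<Rightarrow> real)
                     \<Rightarrow> pt \<Rightarrow> 4 \<Rightarrow> 4 \<Rightarrow> 4 \<Rightarrow> 4 \<Rightarrow> 4 \<Rightarrow> real" where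
  "cov4 g P x i a b c d =
     pd i (\<lambda>y. P y a b c d) x
     - (\<Sum>m\<in>UNIV. christoffel g x m i a * P x m b c d + christoffel g x m i b * P x a m c d
                 + christoffel g x m i c * P x a b m d + christoffel g x m i d * P x a b c m)"

definition cov4_eval :: "(pt \<Rightarrow> real^4^4) \<Rightarrow> (pt \<Rightarrow> 4 \<Rightarrow> 4 \<Rightarrow> 4 \<Rightarrow> 4 \<Rightarrow> real)
                     \<Rightarrow> pt \<Rightarrow> real^4 \<Rightarrow> real^4 \<Rightarrow> real^4 \<Rightarrow> real^4 \<Rightarrow> real^4 \<Rightarrow> real" where
  "cov4_eval g P x W X Y Z V =
     (\<Sum>i\<in>UNIV. \<Sum>a\<in>UNIV. \<Sum>b\<in>UNIV. \<Sum>c\<in>UNIV. \<Sum>d\<in>UNIV.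
        W $ i * X $ a * Y $ b * Z $ c * V $ d * cov4 g P x i a b c d)"

definition orthonormal_frame :: "(pt \<Rightarrow> real^4^4) \<Rightarrow> pt \<Rightarrow> (4 \<Rightarrow> real^4) \<Rightarrow> bool" where
  "orthonormal_frame g x e \<longleftrightarrow>
     (\<forall>a b. a \<noteq> b \<longrightarrow> gform g x (e a) (e b) = 0) \<and>
     (\<forall>a. gform g x (e a) (e a) = 1 \<or> gform g x (e a) (e a) = -1)"

definition divergence_free :: "pt set \<Rightarrow> (pt \<Rightarrow> real^4^4) \<Rightarrow> (pt \<Rightarrow> 4 \<Rightarrow> 4 \<Rightarrow> 4 \<Rightarrow> 4 \<Rightarrow> real) \<Rightarrow> bool" where
  "divergence_free U g P \<longleftrightarrow>
     (\<forall>x\<in>U. \<forall>e. orthonormal_frame g x e \<longrightarrow>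
        (\<forall>X Y Z. (\<Sum>i\<in>UNIV. gform g x (e i) (e i) * cov4_eval g P x (e i) X Y Z (e i)) = 0))"

text \<open>Space-matter tensor P = R + (kappa/2) g \<and> T - sigma G.\<close>
definition space_matter :: "(pt \<Rightarrow> real^4^4) \<Rightarrow> real \<Rightarrow> (pt \<Rightarrow> 4 \<Rightarrow> 4 \<Rightarrow> real) \<Rightarrow> (pt \<Rightarrow> real)
                            \<Rightarrow> pt \<Rightarrow> 4 \<Rightarrow> 4 \<Rightarrow> 4 \<Rightarrow> 4 \<Rightarrow> real" where
  "space_matter g \<kappa> T \<sigma> x a b c d =
     riem g x a b c d
     + \<kappa> / 2 * (g x $ a $ d * T x b c + g x $ b $ c * T x a d
                - g x $ a $ c * T x b d - g x $ b $ d * T x a c)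
     - \<sigma> x * (g x $ a $ d * g x $ b $ c - g x $ a $ c * g x $ b $ d)"

definition lower :: "(pt \<Rightarrow> real^4^4) \<Rightarrow> (pt \<Rightarrow> real^4) \<Rightarrow> pt \<Rightarrow> 4 \<Rightarrow> real" where
  "lower g \<xi> x a = (\<Sum>b\<in>UNIV. g x $ a $ b * \<xi> x $ b)"

definition msqe :: "pt set \<Rightarrow> (pt \<Rightarrow> real^4^4) \<Rightarrow> (pt \<Rightarrow> real) \<Rightarrow> (pt \<Rightarrow> real) \<Rightarrow> (pt \<Rightarrow> real)
     \<Rightarrow> (pt \<Rightarrow> real) \<Rightarrow> (pt \<Rightarrow> real) \<Rightarrow> (pt \<Rightarrow> real^4) \<Rightarrow> (pt \<Rightarrow> real^4)
     \<Rightarrow> (pt \<Rightarrow> 4 \<Rightarrow> 4 \<Rightarrow> real) \<Rightarrow> bool" where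
  "msqe U g \<Psi>1 \<Psi>2 \<Psi>3 \<Psi>4 \<Psi>5 \<xi>1 \<xi>2 D \<longleftrightarrow>
     lorentzian_on U g \<and>
     smooth_on U \<Psi>1 \<and> smooth_on U \<Psi>2 \<and> smooth_on U \<Psi>3 \<and> smooth_on U \<Psi>4 \<and> smooth_on U \<Psi>5 \<and>
     (\<forall>a. smooth_on U (\<lambda>y. \<xi>1 y $ a) \<and> smooth_on U (\<lambda>y. \<xi>2 y $ a)) \<and>
     (\<forall>a b. smooth_on U (\<lambda>y. D y a b)) \<and>
     (\<forall>x\<in>U. \<Psi>2 x \<noteq> 0 \<and> \<Psi>3 x \<noteq> 0 \<and> \<Psi>4 x \<noteq> 0 \<and> \<Psi>5 x \<noteq> 0) \<and>
     (\<forall>x\<in>U. gform g x (\<xi>1 x) (\<xi>1 x) = -1 \<and> gform g x (\<xi>2 x) (\<xi>2 x) = 1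
             \<and> gform g x (\<xi>1 x) (\<xi>2 x) = 0) \<and>
     (\<forall>x\<in>U. (\<forall>a b. D x a b = D x b a)
             \<and> (\<Sum>a\<in>UNIV. \<Sum>b\<in>UNIV. ginv g x $ a $ b * D x a b) = 0
             \<and> (\<forall>a. (\<Sum>b\<in>UNIV. D x a b * \<xi>1 x $ b) = 0)) \<and>
     (\<exists>x\<in>U. \<exists>a b. ricci g x a b \<noteq> 0) \<and>
     (\<forall>x\<in>U. \<forall>a b. ricci g x a b =
         \<Psi>1 x * g x $ a $ b
       + \<Psi>2 x * lower g \<xi>1 x a * lower g \<xi>1 x b
       + \<Psi>3 x * lower g \<xi>2 x a * lower g \<xi>2 x b
       + \<Psi>4 x * (lower g \<xi>1 x a * lower g \<xi>2 x b + lower g \<xi>2 x a * lower g \<xi>1 x b)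
       + \<Psi>5 x * D x a b)"

end

theory Submission
  imports Defs
begin

text \<open>Contract the vanishing divergence of P twice with the inverse metric. Einstein's equation
  replaces \<open>\<kappa> T\<close> by \<open>Ric - (r/2) g\<close>, so that P = R + (1/2) g \<and> Ric - (r/2 + \<sigma>) G. By the
  contracted second Bianchi identity the curvature terms contribute \<open>(3/2) dr\<close>, while the
  G-term contributes \<open>-3 d(r/2 + \<sigma>)\<close>; hence \<open>d\<sigma> = 0\<close>, and \<sigma> is constant on the connected
  domain.\<close>

lemma pd_eq_derivative: "(f has_derivative f') (at x) \<Longrightarrow> pd i f x = f' (axis i 1)"
  unfolding pd_def by (metis frechet_derivative_at)

lemma differentiable_has_frechet_derivative:
  "f differentiable (at x) \<Longrightarrow> (f has_derivative frechet_derivative f (at x)) (at x)"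
  using frechet_derivative_works by blast

lemma pd_add: "f differentiable (at x) \<Longrightarrow> g differentiable (at x) \<Longrightarrow>
   pd i (\<lambda>y. f y + g y) x = pd i f x + pd i g x"
  by (rule pd_eq_derivative[OF has_derivative_add[OF differentiable_has_frechet_derivative
        differentiable_has_frechet_derivative], THEN trans]) (auto simp: pd_def)

lemma pd_diff: "f differentiable (at x) \<Longrightarrow> g differentiable (at x) \<Longrightarrow>
   pd i (\<lambda>y. f y - g y) x = pd i f x - pd i g x"
  by (rule pd_eq_derivative[OF has_derivative_diff[OF differentiable_has_frechet_derivative
        differentiable_has_frechet_derivative], THEN trans]) (auto simp: pd_def)

lemma pd_mult: "f differentiable (at x) \<Longrightarrow> g differentiable (at x) \<Longrightarrow>
   pd i (\<lambda>y. f y * g y) x = f x * pd i g x + pd i f x * g x"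
  for f g :: "pt \<Rightarrow> real"
  by (rule pd_eq_derivative[OF has_derivative_mult[OF differentiable_has_frechet_derivative
        differentiable_has_frechet_derivative], THEN trans]) (auto simp: pd_def)

lemma pd_const: "pd i (\<lambda>y. c) x = 0"
  by (rule pd_eq_derivative[OF has_derivative_const, THEN trans]) auto

lemma pd_cmult: "f differentiable (at x) \<Longrightarrow> pd i (\<lambda>y. c * f y) x = c * pd i f x"
  for f :: "pt \<Rightarrow> real"
  by (rule pd_eq_derivative[OF has_derivative_mult[OF has_derivative_const
        differentiable_has_frechet_derivative], THEN trans]) (auto simp: pd_def)

lemma pd_minus: "f differentiable (at x) \<Longrightarrow> pd i (\<lambda>y. - f y) x = - pd i f x"
  for f :: "pt \<Rightarrow> real"
  using pd_cmult[of f x i "-1"] by simp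

lemma pd_divide_const: "f differentiable (at x) \<Longrightarrow> pd i (\<lambda>y. f y / c) x = pd i f x / c"
  for f :: "pt \<Rightarrow> real"
  using pd_mult[of f x "\<lambda>y. inverse c" i] by (simp add: pd_const divide_inverse)

lemma pd_sum: "finite A \<Longrightarrow> (\<And>a. a \<in> A \<Longrightarrow> f a differentiable (at x)) \<Longrightarrow>
   pd i (\<lambda>y. \<Sum>a\<in>A. f a y) x = (\<Sum>a\<in>A. pd i (f a) x)"
  for f :: "'a \<Rightarrow> pt \<Rightarrow> real"
  by (rule pd_eq_derivative[OF has_derivative_sum[of A f "\<lambda>a. frechet_derivative (f a) (at x)"],
        THEN trans]) (auto simp: pd_def intro: differentiable_has_frechet_derivative)

lemma pd_cong_open:
  assumes "open S" "x \<in> S" "\<And>y. y \<in> S \<Longrightarrow> f y = g y"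
  shows "pd i f x = pd i g x"
proof -
  have "(\<lambda>f'. (f has_derivative f') (at x)) = (\<lambda>f'. (g has_derivative f') (at x))"
    using has_derivative_transform_within_open[of f _ x UNIV S g]
      has_derivative_transform_within_open[of g _ x UNIV S f] assms
    by (auto intro!: ext)
  then show ?thesis unfolding pd_def frechet_derivative_def by simp
qed

lemma pd_zero_imp_constant:
  assumes U: "open U" "connected U" and f: "continuous_on U f" "\<And>x. x \<in> U \<Longrightarrow> f differentiable (at x)"
    and pd_zero: "\<And>x i. x \<in> U \<Longrightarrow> pd i f x = 0"
  shows "\<exists>c. \<forall>x\<in>U. f x = c"
proof -
  have "f constant_on U"
  proof (rule has_derivative_zero_connected_constant_on[OF U(2,1) finite.emptyI f(1)])
    show "\<forall>x\<in>U - {}. (f has_derivative (\<lambda>h. 0)) (at x within U)"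
    proof
      fix x assume x: "x \<in> U - {}"
      have df: "(f has_derivative frechet_derivative f (at x)) (at x)"
        using f(2) x differentiable_has_frechet_derivative by blast
      have lin: "linear (frechet_derivative f (at x))" using df has_derivative_linear by blast
      have "frechet_derivative f (at x) h = 0" for h
      proof -
        have "frechet_derivative f (at x) h = frechet_derivative f (at x) (\<Sum>i\<in>UNIV. (h$i) *\<^sub>R axis i 1)"
          using basis_expansion[of h] by (simp add: scalar_mult_eq_scaleR)
        also have "\<dots> = (\<Sum>i\<in>UNIV. h$i * frechet_derivative f (at x) (axis i 1))"
          by (simp add: linear_sum[OF lin] linear_scale[OF lin])
        also have "\<dots> = 0" using pd_zero[of x] x by (simp add: pd_def)
        finally show ?thesis .
      qed
      then have "frechet_derivative f (at x) = (\<lambda>h. 0)" by auto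
      then show "(f has_derivative (\<lambda>h. 0)) (at x within U)"
        using df has_derivative_at_withinI by metis
    qed
  qed
  then show ?thesis unfolding constant_on_def by blast
qed

lemma C_k_differentiable_at: "open U \<Longrightarrow> C_k (Suc n) U f \<Longrightarrow> x \<in> U \<Longrightarrow> f differentiable (at x)"
  using differentiable_on_eq_differentiable_at by auto

lemma C_k_continuous_on: "C_k n U f \<Longrightarrow> continuous_on U f"
  by (cases n) (auto intro: differentiable_imp_continuous_on)

lemma C_k_SucD: "C_k (Suc n) U f \<Longrightarrow> C_k n U f"
  by (induction n arbitrary: f) (auto intro: differentiable_imp_continuous_on)

lemma C_k_cong: "open U \<Longrightarrow> (\<And>y. y \<in> U \<Longrightarrow> f y = g y) \<Longrightarrow> C_k n U f \<Longrightarrow> C_k n U g"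
proof (induction n arbitrary: f g)
  case 0 thus ?case using continuous_on_cong by auto
next
  case (Suc n)
  have "g differentiable_on U"
    unfolding differentiable_on_eq_differentiable_at[OF \<open>open U\<close>]
  proof
    fix x assume "x \<in> U"
    have "f differentiable (at x)" using Suc.prems \<open>x \<in> U\<close> C_k_differentiable_at by blast
    then show "g differentiable (at x)"
      using has_derivative_transform_within_open[OF _ \<open>open U\<close> \<open>x \<in> U\<close>] Suc.prems
      unfolding differentiable_def by blast
  qed
  moreover have "C_k n U (pd i g)" for i
  proof -
    have "C_k n U (pd i f)" using Suc.prems by simp
    then show ?thesis
      by (rule Suc.IH[OF \<open>open U\<close>, rotated]) (rule pd_cong_open[OF \<open>open U\<close>], auto simp: Suc.prems)
  qed
  ultimately show ?case by simp
qed

lemma C_k_const: "C_k n U (\<lambda>y. c)"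
proof (induction n arbitrary: c)
  case 0 thus ?case by simp
next
  case (Suc n)
  have "pd i (\<lambda>y. c) = (\<lambda>y. 0)" for i by (rule ext) (simp add: pd_const)
  then show ?case using Suc by simp
qed

lemma C_k_add: "open U \<Longrightarrow> C_k n U f \<Longrightarrow> C_k n U g \<Longrightarrow> C_k n U (\<lambda>y. f y + g y)"
proof (induction n arbitrary: f g)
  case 0 thus ?case by (auto intro: continuous_on_add)
next
  case (Suc n)
  have "(\<lambda>y. f y + g y) differentiable_on U" using Suc.prems by auto
  moreover have "C_k n U (pd i (\<lambda>y. f y + g y))" for i
  proof -
    have "C_k n U (\<lambda>y. pd i f y + pd i g y)" using Suc by auto
    then show ?thesis
      by (rule C_k_cong[OF \<open>open U\<close>, rotated])
        (rule pd_add[symmetric]; rule C_k_differentiable_at[OF \<open>open U\<close>]; use Suc.prems in auto)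
  qed
  ultimately show ?case by simp
qed

lemma C_k_mult: "open U \<Longrightarrow> C_k n U f \<Longrightarrow> C_k n U g \<Longrightarrow> C_k n U (\<lambda>y. f y * g y)"
  for f g :: "pt \<Rightarrow> real"
proof (induction n arbitrary: f g)
  case 0 thus ?case by (auto intro: continuous_on_mult)
next
  case (Suc n)
  have "(\<lambda>y. f y * g y) differentiable_on U" using Suc.prems by auto
  moreover have "C_k n U (pd i (\<lambda>y. f y * g y))" for i
  proof -
    have "C_k n U f" "C_k n U g" by (rule C_k_SucD, rule Suc.prems)+
    then have "C_k n U (\<lambda>y. f y * pd i g y + pd i f y * g y)"
      using Suc by (intro C_k_add Suc.IH) auto
    then show ?thesis
      by (rule C_k_cong[OF \<open>open U\<close>, rotated])
        (rule pd_mult[symmetric]; rule C_k_differentiable_at[OF \<open>open U\<close>]; use Suc.prems in auto)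
  qed
  ultimately show ?case by simp
qed

lemma C_k_cmult: "open U \<Longrightarrow> C_k n U f \<Longrightarrow> C_k n U (\<lambda>y. c * f y)"
  for f :: "pt \<Rightarrow> real"
  by (rule C_k_mult[OF _ C_k_const])

lemma C_k_diff: "open U \<Longrightarrow> C_k n U f \<Longrightarrow> C_k n U g \<Longrightarrow> C_k n U (\<lambda>y. f y - g y)"
  for f g :: "pt \<Rightarrow> real"
  using C_k_add[of U n f "\<lambda>y. (-1) * g y"] C_k_cmult[of U n g "-1"] by simp

lemma C_k_sum:
  fixes f :: "'a \<Rightarrow> pt \<Rightarrow> real"
  assumes "open U" "finite A" "\<And>a. a \<in> A \<Longrightarrow> C_k n U (f a)"
  shows "C_k n U (\<lambda>y. \<Sum>a\<in>A. f a y)"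
  using assms(2,3) by (induction A rule: finite_induct) (auto intro: C_k_add[OF assms(1)] C_k_const)

lemma C_k_prod:
  fixes f :: "'a \<Rightarrow> pt \<Rightarrow> real"
  assumes "open U" "finite A" "\<And>a. a \<in> A \<Longrightarrow> C_k n U (f a)"
  shows "C_k n U (\<lambda>y. \<Prod>a\<in>A. f a y)"
  using assms(2,3) by (induction A rule: finite_induct) (auto intro: C_k_mult[OF assms(1)] C_k_const)

lemma C_k_inverse:
  "open U \<Longrightarrow> (\<And>y. y \<in> U \<Longrightarrow> f y \<noteq> 0) \<Longrightarrow> C_k n U f \<Longrightarrow> C_k n U (\<lambda>y. inverse (f y))"
  for f :: "pt \<Rightarrow> real"
proof (induction n arbitrary: f)
  case 0 thus ?case by (auto intro: continuous_on_inverse)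
next
  case (Suc n)
  have df: "f differentiable (at y)" if "y \<in> U" for y using Suc.prems that C_k_differentiable_at by blast
  have "(\<lambda>y. inverse (f y)) differentiable_on U"
    unfolding differentiable_on_eq_differentiable_at[OF \<open>open U\<close>]
    using Suc.prems df by (auto intro!: differentiable_inverse)
  moreover have "C_k n U (pd i (\<lambda>y. inverse (f y)))" for i
  proof -
    have "C_k n U f" by (rule C_k_SucD, rule Suc.prems)+
    then have "C_k n U (\<lambda>y. - 1 * (inverse (f y) * pd i f y * inverse (f y)))"
      using Suc by (intro C_k_cmult C_k_mult Suc.IH) auto
    then show ?thesis
    proof (rule C_k_cong[OF \<open>open U\<close>, rotated])
      fix y assume "y \<in> U"
      show "- 1 * (inverse (f y) * pd i f y * inverse (f y)) = pd i (\<lambda>y. inverse (f y)) y"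
        using pd_eq_derivative[OF Deriv.has_derivative_inverse[OF Suc.prems(2)[OF \<open>y \<in> U\<close>]
            differentiable_has_frechet_derivative[OF df[OF \<open>y \<in> U\<close>]]], of i]
        by (simp add: pd_def)
    qed
  qed
  ultimately show ?case by simp
qed

lemma smooth_on_C_k: "smooth_on U f \<Longrightarrow> C_k n U f"
  by (simp add: smooth_on_def)

lemma smooth_on_differentiable: "open U \<Longrightarrow> smooth_on U f \<Longrightarrow> x \<in> U \<Longrightarrow> f differentiable (at x)"
  using C_k_differentiable_at smooth_on_C_k by blast

lemma smooth_on_continuous_on: "smooth_on U f \<Longrightarrow> continuous_on U f"
  using C_k_continuous_on smooth_on_C_k by blast

lemma smooth_on_pd: "smooth_on U f \<Longrightarrow> smooth_on U (pd i f)"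
  unfolding smooth_on_def by (metis C_k.simps(2))

lemma smooth_on_cong: "open U \<Longrightarrow> (\<And>y. y \<in> U \<Longrightarrow> f y = g y) \<Longrightarrow> smooth_on U f \<Longrightarrow> smooth_on U g"
  unfolding smooth_on_def using C_k_cong by blast

lemma smooth_on_const: "smooth_on U (\<lambda>y. c)"
  by (simp add: smooth_on_def C_k_const)

lemma smooth_on_add: "open U \<Longrightarrow> smooth_on U f \<Longrightarrow> smooth_on U g \<Longrightarrow> smooth_on U (\<lambda>y. f y + g y)"
  by (simp add: smooth_on_def C_k_add)

lemma smooth_on_diff: "open U \<Longrightarrow> smooth_on U f \<Longrightarrow> smooth_on U g \<Longrightarrow> smooth_on U (\<lambda>y. f y - g y)"
  for f g :: "pt \<Rightarrow> real"
  by (simp add: smooth_on_def C_k_diff)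

lemma smooth_on_mult: "open U \<Longrightarrow> smooth_on U f \<Longrightarrow> smooth_on U g \<Longrightarrow> smooth_on U (\<lambda>y. f y * g y)"
  for f g :: "pt \<Rightarrow> real"
  by (simp add: smooth_on_def C_k_mult)

lemma smooth_on_divide_const: "open U \<Longrightarrow> smooth_on U f \<Longrightarrow> smooth_on U (\<lambda>y. f y / c)"
  for f :: "pt \<Rightarrow> real"
  using smooth_on_mult[OF _ _ smooth_on_const, of U f "inverse c"] by (simp add: divide_inverse)

lemma smooth_on_sum: "open U \<Longrightarrow> finite A \<Longrightarrow> (\<And>a. a \<in> A \<Longrightarrow> smooth_on U (f a)) \<Longrightarrow>
    smooth_on U (\<lambda>y. \<Sum>a\<in>A. f a y)"
  for f :: "'a \<Rightarrow> pt \<Rightarrow> real"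
  by (simp add: smooth_on_def C_k_sum)

lemma smooth_on_prod: "open U \<Longrightarrow> finite A \<Longrightarrow> (\<And>a. a \<in> A \<Longrightarrow> smooth_on U (f a)) \<Longrightarrow>
    smooth_on U (\<lambda>y. \<Prod>a\<in>A. f a y)"
  for f :: "'a \<Rightarrow> pt \<Rightarrow> real"
  by (simp add: smooth_on_def C_k_prod)

lemma smooth_on_inverse: "open U \<Longrightarrow> (\<And>y. y \<in> U \<Longrightarrow> f y \<noteq> 0) \<Longrightarrow> smooth_on U f \<Longrightarrow>
    smooth_on U (\<lambda>y. inverse (f y))"
  for f :: "pt \<Rightarrow> real"
  by (simp add: smooth_on_def C_k_inverse)

section \<open>Symmetry of second partial derivatives\<close>

lemma has_real_derivative_pd_line:
  assumes "f differentiable (at (p + t *\<^sub>R axis i 1))"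
  shows "((\<lambda>s. f (p + s *\<^sub>R axis i 1)) has_real_derivative pd i f (p + t *\<^sub>R axis i 1)) (at t)"
proof -
  let ?w = "axis i 1 :: pt" and ?Df = "frechet_derivative f (at (p + t *\<^sub>R axis i 1))"
  have line: "((\<lambda>s. p + s *\<^sub>R ?w) has_derivative (\<lambda>h. h *\<^sub>R ?w)) (at t)"
    by (auto intro!: derivative_eq_intros)
  have df: "(f has_derivative ?Df) (at (p + t *\<^sub>R ?w))"
    using assms differentiable_has_frechet_derivative by blast
  have "((\<lambda>s. f (p + s *\<^sub>R ?w)) has_derivative (\<lambda>h. ?Df (h *\<^sub>R ?w))) (at t)"
    using has_derivative_compose[OF line df] by simp
  moreover have "(\<lambda>h. ?Df (h *\<^sub>R ?w)) = (*) (?Df ?w)"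
    using linear_scale[OF has_derivative_linear[OF df]] by (auto simp: mult.commute)
  ultimately show ?thesis unfolding has_field_derivative_def pd_def by simp
qed

lemma dist_add_axes_le:
  fixes x :: pt
  assumes "0 \<le> a" "0 \<le> b"
  shows "dist (x + a *\<^sub>R axis k 1 + b *\<^sub>R axis l 1) x \<le> a + b"
proof -
  have "dist (x + a *\<^sub>R axis k 1 + b *\<^sub>R axis l 1) x = norm (a *\<^sub>R axis k 1 + b *\<^sub>R (axis l 1 :: pt))"
    by (simp add: dist_norm)
  also have "\<dots> \<le> norm (a *\<^sub>R (axis k 1 :: pt)) + norm (b *\<^sub>R (axis l 1 :: pt))"
    by (rule norm_triangle_ineq)
  finally show ?thesis using assms by simp
qed

lemma second_difference_mean_value:
  assumes U: "open U" and f: "C_k 2 U f" and t: "t > 0" and ball: "cball x (2 * t) \<subseteq> U"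
  shows "\<exists>p. dist p x < 2 * t \<and>
     f (x + t *\<^sub>R axis i 1 + t *\<^sub>R axis j 1) - f (x + t *\<^sub>R axis i 1) - f (x + t *\<^sub>R axis j 1) + f x
     = t * t * pd j (pd i f) p"
proof -
  define u where "u = (axis i 1 :: pt)"
  define v where "v = (axis j 1 :: pt)"
  have box: "x + a *\<^sub>R u + b *\<^sub>R v \<in> U" if "0 \<le> a" "a \<le> t" "0 \<le> b" "b \<le> t" for a b
    using dist_add_axes_le[of a b x i j] that ball by (auto simp: u_def v_def dist_commute subset_iff)
  have f: "C_k (Suc (Suc 0)) U f" using f by (simp add: numeral_2_eq_2)
  have df: "f differentiable (at y)" if "y \<in> U" for y using C_k_differentiable_at[OF U f that] .
  have dfi: "pd i f differentiable (at y)" if "y \<in> U" for y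
    using C_k_differentiable_at[OF U _ that, of 0 "pd i f"] f by simp
  define \<phi> where "\<phi> s = f (x + t *\<^sub>R v + s *\<^sub>R u) - f (x + s *\<^sub>R u)" for s
  have "\<exists>z. 0 < z \<and> z < t \<and> \<phi> t - \<phi> 0 = (t - 0) * (pd i f (x + t *\<^sub>R v + z *\<^sub>R u) - pd i f (x + z *\<^sub>R u))"
  proof (rule MVT2[OF t])
    fix s assume s: "0 \<le> s" "s \<le> t"
    have "x + t *\<^sub>R v + s *\<^sub>R u \<in> U" "x + s *\<^sub>R u \<in> U"
      using box[of s t] box[of s 0] s t by (simp_all add: algebra_simps)
    then show "DERIV \<phi> s :> pd i f (x + t *\<^sub>R v + s *\<^sub>R u) - pd i f (x + s *\<^sub>R u)"
      unfolding \<phi>_def u_def by (intro DERIV_diff has_real_derivative_pd_line) (auto simp: u_def df)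
  qed
  then obtain \<xi> where \<xi>: "0 < \<xi>" "\<xi> < t"
    and e1: "\<phi> t - \<phi> 0 = t * (pd i f (x + t *\<^sub>R v + \<xi> *\<^sub>R u) - pd i f (x + \<xi> *\<^sub>R u))" by auto
  define \<psi> where "\<psi> s = pd i f (x + \<xi> *\<^sub>R u + s *\<^sub>R v)" for s
  have "\<exists>z. 0 < z \<and> z < t \<and> \<psi> t - \<psi> 0 = (t - 0) * pd j (pd i f) (x + \<xi> *\<^sub>R u + z *\<^sub>R v)"
  proof (rule MVT2[OF t])
    fix s assume s: "0 \<le> s" "s \<le> t"
    then have "x + \<xi> *\<^sub>R u + s *\<^sub>R v \<in> U" using box \<xi> by simp
    then show "DERIV \<psi> s :> pd j (pd i f) (x + \<xi> *\<^sub>R u + s *\<^sub>R v)"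
      unfolding \<psi>_def v_def by (rule has_real_derivative_pd_line[OF dfi[unfolded v_def]])
  qed
  then obtain \<eta> where \<eta>: "0 < \<eta>" "\<eta> < t"
    and e2: "\<psi> t - \<psi> 0 = t * pd j (pd i f) (x + \<xi> *\<^sub>R u + \<eta> *\<^sub>R v)" by auto
  have "f (x + t *\<^sub>R u + t *\<^sub>R v) - f (x + t *\<^sub>R u) - f (x + t *\<^sub>R v) + f x = \<phi> t - \<phi> 0"
    by (simp add: \<phi>_def algebra_simps)
  also have "\<dots> = t * t * pd j (pd i f) (x + \<xi> *\<^sub>R u + \<eta> *\<^sub>R v)"
    using e1 e2 by (simp add: \<psi>_def algebra_simps)
  finally have "f (x + t *\<^sub>R u + t *\<^sub>R v) - f (x + t *\<^sub>R u) - f (x + t *\<^sub>R v) + f x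
      = t * t * pd j (pd i f) (x + \<xi> *\<^sub>R u + \<eta> *\<^sub>R v)" .
  moreover have "dist (x + \<xi> *\<^sub>R u + \<eta> *\<^sub>R v) x < 2 * t"
    using dist_add_axes_le[of \<xi> \<eta> x i j] \<xi> \<eta> by (simp add: u_def v_def)
  ultimately show ?thesis unfolding u_def v_def by blast
qed

lemma pd_commute:
  assumes U: "open U" and f: "C_k 2 U f" and x: "x \<in> U"
  shows "pd j (pd i f) x = pd i (pd j f) x"
proof (rule ccontr)
  assume ne: "pd j (pd i f) x \<noteq> pd i (pd j f) x"
  define \<epsilon> where "\<epsilon> = \<bar>pd j (pd i f) x - pd i (pd j f) x\<bar> / 2"
  have \<epsilon>: "\<epsilon> > 0" using ne by (simp add: \<epsilon>_def)
  have "continuous_on U (pd j (pd i f))" "continuous_on U (pd i (pd j f))"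
    using f by (simp_all add: numeral_2_eq_2)
  then obtain d1 d2 where d1: "d1 > 0" "\<And>y. y \<in> U \<Longrightarrow> dist y x < d1 \<Longrightarrow> dist (pd j (pd i f) y) (pd j (pd i f) x) < \<epsilon>"
    and d2: "d2 > 0" "\<And>y. y \<in> U \<Longrightarrow> dist y x < d2 \<Longrightarrow> dist (pd i (pd j f) y) (pd i (pd j f) x) < \<epsilon>"
    using x \<epsilon> unfolding continuous_on_iff by metis
  obtain d3 where d3: "d3 > 0" "cball x d3 \<subseteq> U" using U x open_contains_cball by blast
  define t where "t = min d1 (min d2 d3) / 2"
  have t: "t > 0" and ball: "cball x (2 * t) \<subseteq> U"
    using d1 d2 d3 by (auto simp: t_def subset_iff)
  obtain p where p: "dist p x < 2 * t"
    "f (x + t *\<^sub>R axis i 1 + t *\<^sub>R axis j 1) - f (x + t *\<^sub>R axis i 1) - f (x + t *\<^sub>R axis j 1) + f x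
     = t * t * pd j (pd i f) p"
    using second_difference_mean_value[OF U f t ball] by blast
  obtain q where q: "dist q x < 2 * t"
    "f (x + t *\<^sub>R axis j 1 + t *\<^sub>R axis i 1) - f (x + t *\<^sub>R axis j 1) - f (x + t *\<^sub>R axis i 1) + f x
     = t * t * pd i (pd j f) q"
    using second_difference_mean_value[OF U f t ball] by blast
  have "t * t * pd j (pd i f) p = t * t * pd i (pd j f) q"
    using p(2) q(2) by (simp add: algebra_simps)
  then have eq: "pd j (pd i f) p = pd i (pd j f) q" using t by simp
  have "p \<in> U" "q \<in> U" using p(1) q(1) ball by (auto simp: dist_commute subset_iff)
  then have "dist (pd j (pd i f) p) (pd j (pd i f) x) < \<epsilon>" "dist (pd i (pd j f) q) (pd i (pd j f) x) < \<epsilon>"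
    using d1(2) d2(2) p(1) q(1) by (auto simp: t_def)
  then have "\<bar>pd j (pd i f) x - pd i (pd j f) x\<bar> < 2 * \<epsilon>"
    using eq by (simp add: dist_real_def)
  then show False by (simp add: \<epsilon>_def)
qed

section \<open>Inverse of a Lorentzian metric\<close>

lemma matrix_inv_unique:
  fixes A B :: "'a::field^'n^'n"
  assumes "B ** A = mat 1"
  shows "matrix_inv A = B"
proof -
  have AB: "A ** B = mat 1" using assms matrix_left_right_inverse by blast
  have "A ** matrix_inv A = mat 1 \<and> matrix_inv A ** A = mat 1"
    unfolding matrix_inv_def using AB assms by (rule someI[of _ B, OF conjI])
  then have "matrix_inv A ** A = mat 1" by blast
  have "matrix_inv A = matrix_inv A ** (A ** B)" using AB by simp
  also have "\<dots> = (matrix_inv A ** A) ** B" by (simp add: matrix_mul_assoc)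
  also have "\<dots> = B" using \<open>matrix_inv A ** A = mat 1\<close> by simp
  finally show ?thesis .
qed

definition minkowski :: "4 \<Rightarrow> 4 \<Rightarrow> real" where
  "minkowski a b = (if a = b then (if a = 0 then -1 else 1) else 0)"

lemma minkowski_square: "(\<Sum>b\<in>UNIV. minkowski a b * minkowski b c) = (if a = c then 1 else 0)"
proof -
  have "(\<Sum>b\<in>UNIV. minkowski a b * minkowski b c) = minkowski a a * minkowski a c"
    by (subst sum.remove[of _ a]) (auto simp: minkowski_def intro!: sum.neutral)
  then show ?thesis by (simp add: minkowski_def)
qed

text \<open>If the columns of E are an orthonormal frame, \<open>E\<^sup>T G E = \<eta>\<close>, hence \<open>G\<^sup>-\<^sup>1 = E \<eta> E\<^sup>T\<close>.\<close>

lemma orthonormal_frame_matrix_inv: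
  fixes G :: "real^4^4" and e :: "4 \<Rightarrow> real^4"
  assumes e: "\<And>a b. (\<Sum>c\<in>UNIV. \<Sum>d\<in>UNIV. e a $ c * e b $ d * G $ c $ d) = minkowski a b"
  shows "matrix_inv G = (\<chi> j d. \<Sum>a\<in>UNIV. e a $ j * minkowski a a * e a $ d)"
    and "G ** matrix_inv G = mat 1" and "matrix_inv G ** G = mat 1"
proof -
  define E :: "real^4^4" where "E = (\<chi> i a. e a $ i)"
  define N :: "real^4^4" where "N = (\<chi> a b. minkowski a b)"
  have "(transpose E ** G ** E) $ a $ b = (\<Sum>c\<in>UNIV. \<Sum>d\<in>UNIV. e a $ c * e b $ d * G $ c $ d)" for a b
    unfolding E_def
    by (simp add: matrix_matrix_mult_def transpose_def sum_distrib_right, subst sum.swap)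
      (simp add: mult_ac)
  then have "transpose E ** G ** E = N"
    unfolding N_def by (simp add: vec_eq_iff e)
  then have "(transpose E ** G) ** (E ** N) = N ** N" by (simp add: matrix_mul_assoc)
  also have "N ** N = mat 1"
    unfolding N_def by (simp add: vec_eq_iff matrix_matrix_mult_def mat_def minkowski_square)
  finally have "(E ** N) ** (transpose E ** G) = mat 1" using matrix_left_right_inverse by blast
  then have inv: "(E ** N ** transpose E) ** G = mat 1" by (simp add: matrix_mul_assoc)
  then have mi: "matrix_inv G = E ** N ** transpose E" by (rule matrix_inv_unique)
  have "(\<Sum>k\<in>UNIV. (\<Sum>a\<in>UNIV. e a $ j * minkowski a k) * e k $ d)
      = (\<Sum>k\<in>UNIV. e k $ j * minkowski k k * e k $ d)" for j d
  proof (rule sum.cong[OF refl])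
    fix k
    have "(\<Sum>a\<in>UNIV. e a $ j * minkowski a k) = e k $ j * minkowski k k"
      by (subst sum.remove[of _ k]) (auto simp: minkowski_def intro!: sum.neutral)
    then show "(\<Sum>a\<in>UNIV. e a $ j * minkowski a k) * e k $ d = e k $ j * minkowski k k * e k $ d"
      by simp
  qed
  then have "E ** N ** transpose E = (\<chi> j d. \<Sum>a\<in>UNIV. e a $ j * minkowski a a * e a $ d)"
    unfolding E_def N_def by (simp add: vec_eq_iff matrix_matrix_mult_def transpose_def)
  then show "matrix_inv G = (\<chi> j d. \<Sum>a\<in>UNIV. e a $ j * minkowski a a * e a $ d)" using mi by simp
  show "matrix_inv G ** G = mat 1" using mi inv by simp
  then show "G ** matrix_inv G = mat 1" using matrix_left_right_inverse by blast
qed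

lemma smooth_on_det:
  assumes "open U" "\<And>a b. smooth_on U (\<lambda>y. M y $ a $ b)"
  shows "smooth_on U (\<lambda>y. det (M y :: real^4^4))"
  unfolding det_def
  by (intro smooth_on_sum smooth_on_mult smooth_on_const smooth_on_prod assms)
    (auto simp: finite_permutations)

lemma matrix_vector_mult_axis: "(A *v axis j 1) $ k = (A :: real^4^4) $ k $ j"
  by (simp add: matrix_vector_mult_def axis_def if_distrib cong: if_cong)

lemma if_zero_mult: "(if P then z else 0) * w = (if P then z * w else (0::real))"
  by simp

lemma mult_if_zero: "w * (if P then z else 0) = (if P then w * z else (0::real))"
  by simp

lemma sum_if_zero: "(\<Sum>d\<in>A. if P then F d else 0) = (if P then (\<Sum>d\<in>A. F d) else (0::real))"
  by simp

lemmas delta_simps = if_zero_mult mult_if_zero sum.delta sum.delta'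

lemma sum_swap3: "(\<Sum>a\<in>A. \<Sum>b\<in>B. \<Sum>c\<in>C. F a b c) = (\<Sum>b\<in>B. \<Sum>c\<in>C. \<Sum>a\<in>A. F a b c)"
  by (subst sum.swap) (rule sum.cong[OF refl], rule sum.swap)

locale lorentzian_chart =
  fixes U :: "pt set" and g :: "pt \<Rightarrow> real^4^4"
  assumes open_U: "open U" and lorentzian: "lorentzian_on U g"
begin

lemma smooth_differentiable: "smooth_on U f \<Longrightarrow> x \<in> U \<Longrightarrow> f differentiable (at x)"
  using smooth_on_differentiable[OF open_U] by blast

lemma smooth_metric: "smooth_on U (\<lambda>y. g y $ a $ b)"
  using lorentzian unfolding lorentzian_on_def by simp

lemma metric_sym: "x \<in> U \<Longrightarrow> g x $ a $ b = g x $ b $ a"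
  using lorentzian unfolding lorentzian_on_def by simp

lemma orthonormal_frame_exists:
  assumes "x \<in> U"
  shows "\<exists>e. \<forall>a b. (\<Sum>c\<in>UNIV. \<Sum>d\<in>UNIV. e a $ c * e b $ d * g x $ c $ d) = minkowski a b"
  using assms lorentzian unfolding lorentzian_on_def gform_def minkowski_def by auto

lemma ginv_eq_frame_sum:
  assumes "x \<in> U" "\<And>a b. (\<Sum>c\<in>UNIV. \<Sum>d\<in>UNIV. e a $ c * e b $ d * g x $ c $ d) = minkowski a b"
  shows "ginv g x $ j $ d = (\<Sum>a\<in>UNIV. e a $ j * minkowski a a * e a $ d)"
  unfolding ginv_def orthonormal_frame_matrix_inv(1)[OF assms(2)] by simp

lemma ginv_sym: "x \<in> U \<Longrightarrow> ginv g x $ a $ b = ginv g x $ b $ a"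
proof -
  assume x: "x \<in> U"
  then obtain e where "\<And>a b. (\<Sum>c\<in>UNIV. \<Sum>d\<in>UNIV. e a $ c * e b $ d * g x $ c $ d) = minkowski a b"
    using orthonormal_frame_exists by blast
  then have "ginv g x $ j $ d = (\<Sum>i\<in>UNIV. e i $ j * minkowski i i * e i $ d)" for j d
    by (rule ginv_eq_frame_sum[OF x])
  then show ?thesis by (simp add: mult_ac)
qed

lemma metric_matrix_inverse:
  assumes "x \<in> U"
  shows "g x ** ginv g x = mat 1" "ginv g x ** g x = mat 1"
proof -
  obtain e where "\<And>a b. (\<Sum>c\<in>UNIV. \<Sum>d\<in>UNIV. e a $ c * e b $ d * g x $ c $ d) = minkowski a b"
    using orthonormal_frame_exists[OF assms] by blast
  then show "g x ** ginv g x = mat 1" "ginv g x ** g x = mat 1"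
    unfolding ginv_def by (rule orthonormal_frame_matrix_inv(2,3))+
qed

lemma ginv_metric_contract:
  assumes "x \<in> U"
  shows "(\<Sum>b\<in>UNIV. ginv g x $ a $ b * g x $ b $ c) = (if a = c then 1 else 0)"
proof -
  have "(ginv g x ** g x) $ a $ c = mat 1 $ a $ c" using metric_matrix_inverse(2)[OF assms] by simp
  then show ?thesis by (simp add: matrix_matrix_mult_def mat_def)
qed

lemma metric_ginv_contract:
  assumes "x \<in> U"
  shows "(\<Sum>b\<in>UNIV. g x $ a $ b * ginv g x $ b $ c) = (if a = c then 1 else 0)"
proof -
  have "(g x ** ginv g x) $ a $ c = mat 1 $ a $ c" using metric_matrix_inverse(1)[OF assms] by simp
  then show ?thesis by (simp add: matrix_matrix_mult_def mat_def)
qed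

lemma ginv_metric_contract_last:
  "x \<in> U \<Longrightarrow> (\<Sum>d\<in>UNIV. ginv g x $ j $ d * g x $ l $ d) = (if j = l then 1 else 0)"
  using ginv_metric_contract[of x j l] by (simp add: metric_sym[of x l])

lemma smooth_ginv: "smooth_on U (\<lambda>y. ginv g y $ k $ j)"
proof -
  define M where "M y = (\<chi> a b. if b = k then axis j 1 $ a else g y $ a $ b)" for y :: pt
  have det_nz: "det (g y) \<noteq> 0" if "y \<in> U" for y
    using metric_matrix_inverse[OF that] invertible_det_nz unfolding invertible_def by blast
  have "smooth_on U (\<lambda>y. det (M y) * inverse (det (g y)))"
  proof (intro smooth_on_mult smooth_on_inverse smooth_on_det open_U det_nz smooth_metric)
    show "smooth_on U (\<lambda>y. M y $ a $ b)" for a b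
      unfolding M_def by (cases "b = k") (auto intro: smooth_on_const smooth_metric)
  qed
  then show ?thesis
  proof (rule smooth_on_cong[OF open_U, rotated])
    fix y assume y: "y \<in> U"
    have "g y *v (ginv g y *v axis j 1) = axis j 1"
      using metric_matrix_inverse(1)[OF y] by (simp add: matrix_vector_mul_assoc)
    then have "ginv g y *v axis j 1 =
        (\<chi> k. det (\<chi> i j'. if j' = k then axis j 1 $ i else g y $ i $ j') / det (g y))"
      using cramer[OF det_nz[OF y]] by blast
    then show "det (M y) * inverse (det (g y)) = ginv g y $ k $ j"
      by (simp add: M_def matrix_vector_mult_axis[symmetric] divide_inverse)
  qed
qed

lemma smooth_christoffel: "smooth_on U (\<lambda>y. christoffel g y k i j)"
  unfolding christoffel_def
  by (intro smooth_on_mult smooth_on_const smooth_on_sum smooth_on_add smooth_on_diff open_U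
      smooth_ginv smooth_on_pd smooth_metric) auto

lemma smooth_riem_up: "smooth_on U (\<lambda>y. riem_up g y l i j k)"
  unfolding riem_up_def
  by (intro smooth_on_mult smooth_on_sum smooth_on_add smooth_on_diff open_U
      smooth_on_pd smooth_christoffel) auto

lemma smooth_ricci: "smooth_on U (\<lambda>y. ricci g y j k)"
  unfolding ricci_def by (intro smooth_on_sum open_U smooth_riem_up) auto

lemma smooth_scal: "smooth_on U (scal g)"
  unfolding scal_def[abs_def] by (intro smooth_on_sum smooth_on_mult open_U smooth_ginv smooth_ricci) auto

lemma pd_metric_sym: "x \<in> U \<Longrightarrow> pd e (\<lambda>y. g y $ a $ b) x = pd e (\<lambda>y. g y $ b $ a) x"
  by (rule pd_cong_open[OF open_U]) (auto simp: metric_sym)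

lemma christoffel_sym: "x \<in> U \<Longrightarrow> christoffel g x k i j = christoffel g x k j i"
  unfolding christoffel_def by (simp add: pd_metric_sym[of x _ i j] metric_sym[of x i j] algebra_simps)

lemma christoffel_lower:
  assumes x: "x \<in> U"
  shows "(\<Sum>m\<in>UNIV. christoffel g x m i j * g x $ m $ k) =
    (pd i (\<lambda>y. g y $ j $ k) x + pd j (\<lambda>y. g y $ i $ k) x - pd k (\<lambda>y. g y $ i $ j) x) / 2"
proof -
  define X where "X l = pd i (\<lambda>y. g y $ j $ l) x + pd j (\<lambda>y. g y $ i $ l) x - pd l (\<lambda>y. g y $ i $ j) x" for l
  have "(\<Sum>m\<in>UNIV. christoffel g x m i j * g x $ m $ k)
      = (\<Sum>m\<in>UNIV. \<Sum>l\<in>UNIV. (1/2) * (ginv g x $ m $ l * X l * g x $ m $ k))"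
    unfolding christoffel_def X_def by (simp add: sum_distrib_left sum_distrib_right mult_ac)
  also have "\<dots> = (\<Sum>l\<in>UNIV. (1/2) * X l * (\<Sum>m\<in>UNIV. ginv g x $ l $ m * g x $ m $ k))"
    by (subst sum.swap) (simp add: sum_distrib_left ginv_sym[OF x] mult_ac)
  also have "\<dots> = X k / 2" by (simp add: ginv_metric_contract[OF x] if_distrib cong: if_cong)
  finally show ?thesis by (simp add: X_def)
qed

lemma metric_compatible:
  assumes x: "x \<in> U"
  shows "pd e (\<lambda>y. g y $ a $ b) x =
    (\<Sum>m\<in>UNIV. christoffel g x m e a * g x $ m $ b + christoffel g x m e b * g x $ a $ m)"
proof -
  have "(\<Sum>m\<in>UNIV. christoffel g x m e a * g x $ m $ b + christoffel g x m e b * g x $ a $ m)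
     = (\<Sum>m\<in>UNIV. christoffel g x m e a * g x $ m $ b) + (\<Sum>m\<in>UNIV. christoffel g x m e b * g x $ m $ a)"
    by (simp add: sum.distrib metric_sym[OF x, of a])
  also have "\<dots> = pd e (\<lambda>y. g y $ a $ b) x"
    unfolding christoffel_lower[OF x]
    using pd_metric_sym[OF x, of _ a b] pd_metric_sym[OF x, of b a e] pd_metric_sym[OF x, of a b e]
    by (simp add: field_simps)
  finally show ?thesis by simp
qed

lemma pd_ginv_mult_metric:
  assumes x: "x \<in> U"
  shows "(\<Sum>c\<in>UNIV. pd e (\<lambda>y. ginv g y $ a $ c) x * g x $ c $ d)
       = - (\<Sum>c\<in>UNIV. ginv g x $ a $ c * pd e (\<lambda>y. g y $ c $ d) x)"
proof -
  have "pd e (\<lambda>y. \<Sum>c\<in>UNIV. ginv g y $ a $ c * g y $ c $ d) x = pd e (\<lambda>y. if a = d then 1 else 0) x"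
    by (rule pd_cong_open[OF open_U x]) (simp add: ginv_metric_contract)
  moreover have "pd e (\<lambda>y. \<Sum>c\<in>UNIV. ginv g y $ a $ c * g y $ c $ d) x
      = (\<Sum>c\<in>UNIV. ginv g x $ a $ c * pd e (\<lambda>y. g y $ c $ d) x + pd e (\<lambda>y. ginv g y $ a $ c) x * g x $ c $ d)"
    by (subst pd_sum)
      (auto intro!: sum.cong pd_mult smooth_differentiable smooth_on_mult open_U smooth_ginv smooth_metric x)
  ultimately show ?thesis by (simp add: pd_const sum.distrib eq_neg_iff_add_eq_0 add.commute)
qed

lemma pd_ginv:
  assumes x: "x \<in> U"
  shows "pd e (\<lambda>y. ginv g y $ a $ b) x =
    - (\<Sum>p\<in>UNIV. ginv g x $ a $ p * christoffel g x b e p + christoffel g x a e p * ginv g x $ p $ b)"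
proof -
  let ?h = "\<lambda>a b. ginv g x $ a $ b" and ?g = "\<lambda>a b. g x $ a $ b" and ?G = "\<lambda>k i j. christoffel g x k i j"
  let ?dh = "\<lambda>a b. pd e (\<lambda>y. ginv g y $ a $ b) x" and ?dg = "\<lambda>a b. pd e (\<lambda>y. g y $ a $ b) x"
  have "?dh a b = (\<Sum>d\<in>UNIV. (\<Sum>c\<in>UNIV. ?dh a c * ?g c d) * ?h d b)"
  proof -
    have "(\<Sum>d\<in>UNIV. (\<Sum>c\<in>UNIV. ?dh a c * ?g c d) * ?h d b)
        = (\<Sum>c\<in>UNIV. ?dh a c * (\<Sum>d\<in>UNIV. ?g c d * ?h d b))"
      by (simp add: sum_distrib_left sum_distrib_right mult_ac) (rule sum.swap)
    then show ?thesis by (simp add: metric_ginv_contract[OF x] delta_simps)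
  qed
  also have "\<dots> = - (\<Sum>d\<in>UNIV. \<Sum>c\<in>UNIV. \<Sum>m\<in>UNIV. ?h a c * ?G m e c * ?g m d * ?h d b)
                  - (\<Sum>d\<in>UNIV. \<Sum>c\<in>UNIV. \<Sum>m\<in>UNIV. ?h a c * ?G m e d * ?g c m * ?h d b)"
    unfolding pd_ginv_mult_metric[OF x] metric_compatible[OF x]
    by (simp add: sum_distrib_left sum_distrib_right sum.distrib algebra_simps sum_negf sum_subtractf)
  also have "(\<Sum>d\<in>UNIV. \<Sum>c\<in>UNIV. \<Sum>m\<in>UNIV. ?h a c * ?G m e c * ?g m d * ?h d b)
           = (\<Sum>c\<in>UNIV. \<Sum>m\<in>UNIV. ?h a c * ?G m e c * (\<Sum>d\<in>UNIV. ?g m d * ?h d b))"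
    by (subst sum_swap3) (simp add: sum_distrib_left mult_ac)
  also have "\<dots> = (\<Sum>c\<in>UNIV. ?h a c * ?G b e c)"
    by (simp add: metric_ginv_contract[OF x] delta_simps)
  also have "(\<Sum>d\<in>UNIV. \<Sum>c\<in>UNIV. \<Sum>m\<in>UNIV. ?h a c * ?G m e d * ?g c m * ?h d b)
           = (\<Sum>d\<in>UNIV. \<Sum>m\<in>UNIV. (\<Sum>c\<in>UNIV. ?h a c * ?g c m) * ?G m e d * ?h d b)"
    by (rule sum.cong[OF refl], subst sum.swap, simp add: sum_distrib_left sum_distrib_right mult_ac)
  also have "\<dots> = (\<Sum>d\<in>UNIV. ?G a e d * ?h d b)"
    by (simp add: ginv_metric_contract[OF x] delta_simps)
  finally show ?thesis by (simp add: sum.distrib)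
qed

end

section \<open>Covariant derivatives\<close>

definition cov13 :: "(pt \<Rightarrow> real^4^4) \<Rightarrow> (pt \<Rightarrow> 4 \<Rightarrow> 4 \<Rightarrow> 4 \<Rightarrow> 4 \<Rightarrow> real)
    \<Rightarrow> pt \<Rightarrow> 4 \<Rightarrow> 4 \<Rightarrow> 4 \<Rightarrow> 4 \<Rightarrow> 4 \<Rightarrow> real" where
  "cov13 g Q x i l a b c = pd i (\<lambda>y. Q y l a b c) x +
     (\<Sum>m\<in>UNIV. christoffel g x l i m * Q x m a b c - christoffel g x m i a * Q x l m b c
        - christoffel g x m i b * Q x l a m c - christoffel g x m i c * Q x l a b m)"

definition cov2 :: "(pt \<Rightarrow> real^4^4) \<Rightarrow> (pt \<Rightarrow> 4 \<Rightarrow> 4 \<Rightarrow> real) \<Rightarrow> pt \<Rightarrow> 4 \<Rightarrow> 4 \<Rightarrow> 4 \<Rightarrow> real" where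
  "cov2 g S x i b c = pd i (\<lambda>y. S y b c) x -
     (\<Sum>m\<in>UNIV. christoffel g x m i b * S x m c + christoffel g x m i c * S x b m)"

definition kulkarni_nomizu :: "(pt \<Rightarrow> real^4^4) \<Rightarrow> (pt \<Rightarrow> 4 \<Rightarrow> 4 \<Rightarrow> real) \<Rightarrow> pt \<Rightarrow> 4 \<Rightarrow> 4 \<Rightarrow> 4 \<Rightarrow> 4 \<Rightarrow> real" where
  "kulkarni_nomizu g S y a b c d =
     g y $ a $ d * S y b c + g y $ b $ c * S y a d - g y $ a $ c * S y b d - g y $ b $ d * S y a c"

definition const_curvature_tensor :: "(pt \<Rightarrow> real^4^4) \<Rightarrow> pt \<Rightarrow> 4 \<Rightarrow> 4 \<Rightarrow> 4 \<Rightarrow> 4 \<Rightarrow> real" where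
  "const_curvature_tensor g y a b c d = g y $ a $ d * g y $ b $ c - g y $ a $ c * g y $ b $ d"

lemma space_matter_Einstein:
  assumes "\<forall>a b. ricci g y a b - scal g y / 2 * g y $ a $ b = \<kappa> * T y a b"
  shows "space_matter g \<kappa> T \<sigma> y = (\<lambda>a b c d. riem g y a b c d + 1/2 * kulkarni_nomizu g (ricci g) y a b c d
      - (scal g y / 2 + \<sigma> y) * const_curvature_tensor g y a b c d)"
proof (intro ext)
  fix a b c d
  have "\<kappa> / 2 * kulkarni_nomizu g T y a b c d
      = 1/2 * (g y $ a $ d * (\<kappa> * T y b c) + g y $ b $ c * (\<kappa> * T y a d)
               - g y $ a $ c * (\<kappa> * T y b d) - g y $ b $ d * (\<kappa> * T y a c))"
    unfolding kulkarni_nomizu_def by (simp add: algebra_simps)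
  then show "space_matter g \<kappa> T \<sigma> y a b c d = riem g y a b c d + 1/2 * kulkarni_nomizu g (ricci g) y a b c d
      - (scal g y / 2 + \<sigma> y) * const_curvature_tensor g y a b c d"
    unfolding space_matter_def kulkarni_nomizu_def const_curvature_tensor_def
    by (simp add: assms[rule_format, symmetric] algebra_simps)
qed

lemma cov4_cong_open:
  assumes "open U" "x \<in> U" "\<And>y. y \<in> U \<Longrightarrow> P y = P' y"
  shows "cov4 g P x = cov4 g P' x"
proof -
  have "pd i (\<lambda>y. P y a b c d) x = pd i (\<lambda>y. P' y a b c d) x" for i a b c d
    by (rule pd_cong_open[OF assms(1,2)]) (simp add: assms(3))
  then show ?thesis unfolding cov4_def using assms(2,3) by (intro ext) simp
qed

lemma cov4_add:
  assumes "\<And>a b c d. (\<lambda>y. P1 y a b c d) differentiable (at x)"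
    and "\<And>a b c d. (\<lambda>y. P2 y a b c d) differentiable (at x)"
  shows "cov4 g (\<lambda>y a b c d. P1 y a b c d + P2 y a b c d) x i a b c d
       = cov4 g P1 x i a b c d + cov4 g P2 x i a b c d"
  unfolding cov4_def using assms by (simp add: pd_add sum.distrib algebra_simps)

lemma cov4_diff:
  assumes "\<And>a b c d. (\<lambda>y. P1 y a b c d) differentiable (at x)"
    and "\<And>a b c d. (\<lambda>y. P2 y a b c d) differentiable (at x)"
  shows "cov4 g (\<lambda>y a b c d. P1 y a b c d - P2 y a b c d) x i a b c d
       = cov4 g P1 x i a b c d - cov4 g P2 x i a b c d"
  unfolding cov4_def using assms by (simp add: pd_diff sum_subtractf algebra_simps)

lemma cov4_cmult:
  assumes "\<And>a b c d. (\<lambda>y. P y a b c d) differentiable (at x)"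
  shows "cov4 g (\<lambda>y a b c d. k * P y a b c d) x i a b c d = k * cov4 g P x i a b c d"
  unfolding cov4_def using assms by (simp add: pd_cmult sum_distrib_left algebra_simps)

context lorentzian_chart
begin

lemma cov4_lower_index:
  assumes Q: "\<And>l a b c. smooth_on U (\<lambda>y. Q y l a b c)" and x: "x \<in> U"
  shows "cov4 g (\<lambda>y a b c d. \<Sum>l\<in>UNIV. Q y l a b c * g y $ l $ d) x i a b c d
       = (\<Sum>l\<in>UNIV. cov13 g Q x i l a b c * g x $ l $ d)"
proof -
  have "pd i (\<lambda>y. \<Sum>l\<in>UNIV. Q y l a b c * g y $ l $ d) x =
     (\<Sum>l\<in>UNIV. Q x l a b c * pd i (\<lambda>y. g y $ l $ d) x + pd i (\<lambda>y. Q y l a b c) x * g x $ l $ d)"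
    for a b c d
    by (subst pd_sum)
      (auto intro!: sum.cong pd_mult smooth_differentiable smooth_on_mult open_U Q smooth_metric x)
  then show ?thesis
    unfolding cov4_def cov13_def metric_compatible[OF x]
    by (simp only: sum_4) (simp add: algebra_simps)
qed

lemma cov4_riem:
  "x \<in> U \<Longrightarrow> cov4 g (riem g) x i a b c d = (\<Sum>l\<in>UNIV. cov13 g (riem_up g) x i l a b c * g x $ l $ d)"
  using cov4_lower_index[OF smooth_riem_up] unfolding riem_def[abs_def] .

lemma cov4_kulkarni_nomizu:
  assumes S: "\<And>a b. smooth_on U (\<lambda>y. S y a b)" and x: "x \<in> U"
  shows "cov4 g (kulkarni_nomizu g S) x i a b c d = kulkarni_nomizu g (\<lambda>_. cov2 g S x i) x a b c d"
proof -
  have dS: "(\<lambda>y. S y a b) differentiable (at x)" for a b using smooth_differentiable[OF S x] .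
  have dg: "(\<lambda>y. g y $ a $ b) differentiable (at x)" for a b using smooth_differentiable[OF smooth_metric x] .
  have "pd i (\<lambda>y. kulkarni_nomizu g S y a b c d) x =
     (g x $ a $ d * pd i (\<lambda>y. S y b c) x + pd i (\<lambda>y. g y $ a $ d) x * S x b c)
   + (g x $ b $ c * pd i (\<lambda>y. S y a d) x + pd i (\<lambda>y. g y $ b $ c) x * S x a d)
   - (g x $ a $ c * pd i (\<lambda>y. S y b d) x + pd i (\<lambda>y. g y $ a $ c) x * S x b d)
   - (g x $ b $ d * pd i (\<lambda>y. S y a c) x + pd i (\<lambda>y. g y $ b $ d) x * S x a c)" for a b c d
    unfolding kulkarni_nomizu_def
    by (simp add: pd_add pd_diff pd_mult dS dg differentiable_mult differentiable_add differentiable_diff)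
  then show ?thesis
    unfolding cov4_def cov2_def metric_compatible[OF x]
    by (simp only: sum_4) (simp add: kulkarni_nomizu_def algebra_simps)
qed

lemma cov4_scaled_const_curvature_tensor:
  assumes f: "smooth_on U f" and x: "x \<in> U"
  shows "cov4 g (\<lambda>y a b c d. f y * const_curvature_tensor g y a b c d) x i a b c d
       = pd i f x * const_curvature_tensor g x a b c d"
proof -
  have df: "f differentiable (at x)" using smooth_differentiable[OF f x] .
  have dg: "(\<lambda>y. g y $ a $ b) differentiable (at x)" for a b using smooth_differentiable[OF smooth_metric x] .
  have "pd i (\<lambda>y. f y * const_curvature_tensor g y a b c d) x =
     f x * ((g x $ a $ d * pd i (\<lambda>y. g y $ b $ c) x + pd i (\<lambda>y. g y $ a $ d) x * g x $ b $ c)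
           - (g x $ a $ c * pd i (\<lambda>y. g y $ b $ d) x + pd i (\<lambda>y. g y $ a $ c) x * g x $ b $ d))
     + pd i f x * const_curvature_tensor g x a b c d" for a b c d
    unfolding const_curvature_tensor_def
    by (simp add: pd_add pd_diff pd_mult df dg differentiable_mult differentiable_add differentiable_diff)
  then show ?thesis
    unfolding cov4_def metric_compatible[OF x]
    by (simp only: sum_4) (simp add: const_curvature_tensor_def algebra_simps)
qed

lemma smooth_riem: "smooth_on U (\<lambda>y. riem g y a b c d)"
  unfolding riem_def by (intro smooth_on_sum smooth_on_mult open_U smooth_riem_up smooth_metric) auto

lemma smooth_kulkarni_nomizu_ricci: "smooth_on U (\<lambda>y. kulkarni_nomizu g (ricci g) y a b c d)"
  unfolding kulkarni_nomizu_def by (intro smooth_on_add smooth_on_diff smooth_on_mult open_U smooth_ricci smooth_metric)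

lemma smooth_scaled_const_curvature_tensor:
  "smooth_on U f \<Longrightarrow> smooth_on U (\<lambda>y. f y * const_curvature_tensor g y a b c d)"
  unfolding const_curvature_tensor_def by (intro smooth_on_diff smooth_on_mult open_U smooth_metric)

lemma cov4_space_matter:
  assumes x: "x \<in> U" and \<sigma>: "smooth_on U \<sigma>"
    and Einstein: "\<forall>y\<in>U. \<forall>a b. ricci g y a b - scal g y / 2 * g y $ a $ b = \<kappa> * T y a b"
  shows "cov4 g (space_matter g \<kappa> T \<sigma>) x j a b c d =
      (\<Sum>l\<in>UNIV. cov13 g (riem_up g) x j l a b c * g x $ l $ d)
      + 1/2 * kulkarni_nomizu g (\<lambda>_. cov2 g (ricci g) x j) x a b c d
      - pd j (\<lambda>y. scal g y / 2 + \<sigma> y) x * const_curvature_tensor g x a b c d"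
proof -
  let ?F = "\<lambda>y. scal g y / 2 + \<sigma> y" and ?R = "riem g"
    and ?W = "\<lambda>y a b c d. 1/2 * kulkarni_nomizu g (ricci g) y a b c d"
    and ?C = "\<lambda>y a b c d. (scal g y / 2 + \<sigma> y) * const_curvature_tensor g y a b c d"
  have F: "smooth_on U ?F" by (intro smooth_on_add smooth_on_divide_const open_U smooth_scal \<sigma>)
  have dR: "(\<lambda>y. ?R y a b c d) differentiable (at x)"
    and dK: "(\<lambda>y. kulkarni_nomizu g (ricci g) y a b c d) differentiable (at x)"
    and dW: "(\<lambda>y. ?W y a b c d) differentiable (at x)"
    and dC: "(\<lambda>y. ?C y a b c d) differentiable (at x)" for a b c d
    using smooth_differentiable[OF _ x] smooth_riem smooth_kulkarni_nomizu_ricci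
      smooth_scaled_const_curvature_tensor[OF F]
      smooth_on_mult[OF open_U smooth_on_const smooth_kulkarni_nomizu_ricci] by blast+
  have "cov4 g (space_matter g \<kappa> T \<sigma>) x = cov4 g (\<lambda>y a b c d. ?R y a b c d + ?W y a b c d - ?C y a b c d) x"
    using Einstein by (intro cov4_cong_open[OF open_U x] space_matter_Einstein) blast
  then have "cov4 g (space_matter g \<kappa> T \<sigma>) x j a b c d
      = cov4 g (\<lambda>y a b c d. ?R y a b c d + ?W y a b c d - ?C y a b c d) x j a b c d"
    by simp
  also have "\<dots> = cov4 g (\<lambda>y a b c d. ?R y a b c d + ?W y a b c d) x j a b c d - cov4 g ?C x j a b c d"
    by (rule cov4_diff) (intro differentiable_add dR dW dC)+
  also have "cov4 g (\<lambda>y a b c d. ?R y a b c d + ?W y a b c d) x j a b c d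
      = cov4 g ?R x j a b c d + cov4 g ?W x j a b c d"
    by (rule cov4_add) (rule dR dW)+
  also have "cov4 g ?W x j a b c d = 1/2 * cov4 g (kulkarni_nomizu g (ricci g)) x j a b c d"
    by (rule cov4_cmult) (rule dK)
  also have "cov4 g ?C x j a b c d = pd j ?F x * const_curvature_tensor g x a b c d"
    by (rule cov4_scaled_const_curvature_tensor[OF F x])
  finally show ?thesis
    by (simp add: cov4_riem[OF x] cov4_kulkarni_nomizu[OF smooth_ricci x])
qed

end

section \<open>The second Bianchi identity\<close>

text \<open>In coordinates, the second Bianchi identity only uses the symmetry of the Christoffel
  symbols in their lower indices and the symmetry of second partial derivatives.\<close>

lemma bianchi_identity_coordinates:
  fixes G :: "4 \<Rightarrow> 4 \<Rightarrow> 4 \<Rightarrow> real" and dG :: "4 \<Rightarrow> 4 \<Rightarrow> 4 \<Rightarrow> 4 \<Rightarrow> real"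
    and ddG :: "4 \<Rightarrow> 4 \<Rightarrow> 4 \<Rightarrow> 4 \<Rightarrow> 4 \<Rightarrow> real"
  assumes G_sym: "\<And>k i j. G k i j = G k j i" and ddG_sym: "\<And>f e k i j. ddG f e k i j = ddG e f k i j"
  defines "R \<equiv> \<lambda>l i j k. dG i l j k - dG j l i k + (\<Sum>m\<in>UNIV. G l i m * G m j k - G l j m * G m i k)"
  defines "dR \<equiv> \<lambda>e l i j k. ddG e i l j k - ddG e j l i k + (\<Sum>m\<in>UNIV. dG e l i m * G m j k
      + G l i m * dG e m j k - dG e l j m * G m i k - G l j m * dG e m i k)"
  defines "covR \<equiv> \<lambda>e l i j k. dR e l i j k + (\<Sum>m\<in>UNIV. G l e m * R m i j k - G m e i * R l m j k
      - G m e j * R l i m k - G m e k * R l i j m)"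
  shows "covR e l i j k + covR i l j e k + covR j l e i k = 0"
proof -
  have G: "G m i e = G m e i" "G m j i = G m i j" "G m e j = G m j e" for m using G_sym by auto
  have ddG: "ddG i e l j k = ddG e i l j k" "ddG j i l e k = ddG i j l e k" "ddG e j l i k = ddG j e l i k"
    using ddG_sym by auto
  show ?thesis unfolding covR_def dR_def R_def
    by (simp only: sum_4 G ddG) (simp add: algebra_simps)
qed

lemma riem_up_antisym: "riem_up g y l a b c = - riem_up g y l b a c"
  unfolding riem_up_def by (simp only: sum_4; simp add: algebra_simps)

context lorentzian_chart
begin

lemma pd_riem_up:
  assumes x: "x \<in> U"
  shows "pd e (\<lambda>y. riem_up g y l i j k) x =
    pd e (pd i (\<lambda>y. christoffel g y l j k)) x - pd e (pd j (\<lambda>y. christoffel g y l i k)) x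
    + (\<Sum>m\<in>UNIV. pd e (\<lambda>y. christoffel g y l i m) x * christoffel g x m j k
         + christoffel g x l i m * pd e (\<lambda>y. christoffel g y m j k) x
         - pd e (\<lambda>y. christoffel g y l j m) x * christoffel g x m i k
         - christoffel g x l j m * pd e (\<lambda>y. christoffel g y m i k) x)"
proof -
  have d1: "(\<lambda>y. christoffel g y k i j) differentiable (at x)" for k i j
    using smooth_differentiable[OF smooth_christoffel x] .
  have d2: "pd e (\<lambda>y. christoffel g y k i j) differentiable (at x)" for e k i j
    using smooth_differentiable[OF smooth_on_pd[OF smooth_christoffel] x] .
  have d3: "(\<lambda>y. christoffel g y a b c * christoffel g y d e f) differentiable (at x)" for a b c d e f
    using d1 by (rule differentiable_mult) (rule d1)
  have "pd e (\<lambda>y. riem_up g y l i j k) x =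
    pd e (pd i (\<lambda>y. christoffel g y l j k)) x - pd e (pd j (\<lambda>y. christoffel g y l i k)) x
    + (\<Sum>m\<in>UNIV. pd e (\<lambda>y. christoffel g y l i m * christoffel g y m j k) x
                 - pd e (\<lambda>y. christoffel g y l j m * christoffel g y m i k) x)"
    unfolding riem_up_def
    by (simp add: pd_add pd_diff pd_sum d1 d2 d3 differentiable_add differentiable_diff differentiable_sum)
  then show ?thesis by (simp add: pd_mult d1 algebra_simps)
qed

lemma second_bianchi:
  assumes x: "x \<in> U"
  shows "cov13 g (riem_up g) x e l i j k + cov13 g (riem_up g) x i l j e k + cov13 g (riem_up g) x j l e i k = 0"
proof -
  have pd_christoffel_commute:
    "pd f (pd e (\<lambda>y. christoffel g y k i j)) x = pd e (pd f (\<lambda>y. christoffel g y k i j)) x" for f e k i j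
    by (rule pd_commute[OF open_U smooth_on_C_k[OF smooth_christoffel] x])
  have riem_up_x: "riem_up g x l i j k = pd i (\<lambda>y. christoffel g y l j k) x - pd j (\<lambda>y. christoffel g y l i k) x
     + (\<Sum>m\<in>UNIV. christoffel g x l i m * christoffel g x m j k - christoffel g x l j m * christoffel g x m i k)"
    for l i j k by (simp add: riem_up_def)
  show ?thesis
    using bianchi_identity_coordinates[where G = "christoffel g x"
      and dG = "\<lambda>e k i j. pd e (\<lambda>y. christoffel g y k i j) x"
      and ddG = "\<lambda>f e k i j. pd f (pd e (\<lambda>y. christoffel g y k i j)) x"
      and e = e and l = l and i = i and j = j and k = k, OF christoffel_sym[OF x] pd_christoffel_commute]
    unfolding cov13_def pd_riem_up[OF x] riem_up_x by simp
qed

lemma cov13_riem_up_antisym: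
  assumes x: "x \<in> U"
  shows "cov13 g (riem_up g) x i l a b c = - cov13 g (riem_up g) x i l b a c"
proof -
  have "pd i (\<lambda>y. riem_up g y l a b c) x = - pd i (\<lambda>y. riem_up g y l b a c) x"
    by (subst riem_up_antisym) (rule pd_minus[OF smooth_differentiable[OF smooth_riem_up x]])
  then show ?thesis
    unfolding cov13_def
    by (simp only: riem_up_antisym[of g x _ a b c] riem_up_antisym[of g x l _ b c]
        riem_up_antisym[of g x l a _ c] riem_up_antisym[of g x l a b _] sum_4; simp add: algebra_simps)
qed

lemma pd_ricci:
  "x \<in> U \<Longrightarrow> pd i (\<lambda>y. ricci g y a c) x = (\<Sum>e\<in>UNIV. pd i (\<lambda>y. riem_up g y e e a c) x)"
  unfolding ricci_def by (rule pd_sum) (auto intro: smooth_differentiable[OF smooth_riem_up])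

lemma cov13_riem_up_trace:
  assumes x: "x \<in> U"
  shows "(\<Sum>e\<in>UNIV. cov13 g (riem_up g) x b e e a c) = cov2 g (ricci g) x b a c"
  unfolding cov2_def pd_ricci[OF x] unfolding ricci_def cov13_def
  by (simp only: sum_4; simp add: algebra_simps)

lemma contracted_bianchi:
  assumes x: "x \<in> U"
  shows "(\<Sum>e\<in>UNIV. cov13 g (riem_up g) x e e a b c) = cov2 g (ricci g) x a b c - cov2 g (ricci g) x b a c"
proof -
  have "cov13 g (riem_up g) x e e a b c = cov13 g (riem_up g) x a e e b c - cov13 g (riem_up g) x b e e a c" for e
    using second_bianchi[OF x, of e e a b c] cov13_riem_up_antisym[OF x, of a e b e c] by simp
  then have "(\<Sum>e\<in>UNIV. cov13 g (riem_up g) x e e a b c)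
      = (\<Sum>e\<in>UNIV. cov13 g (riem_up g) x a e e b c) - (\<Sum>e\<in>UNIV. cov13 g (riem_up g) x b e e a c)"
    by (simp add: sum_subtractf)
  then show ?thesis by (simp add: cov13_riem_up_trace[OF x])
qed

lemma pd_scal:
  assumes x: "x \<in> U"
  shows "pd a (scal g) x = (\<Sum>b\<in>UNIV. \<Sum>c\<in>UNIV. ginv g x $ b $ c * cov2 g (ricci g) x a b c)"
proof -
  have sm1: "smooth_on U (\<lambda>y. ginv g y $ b $ c * ricci g y b c)" for b c
    by (intro smooth_on_mult open_U smooth_ginv smooth_ricci)
  have sm2: "smooth_on U (\<lambda>y. \<Sum>c\<in>UNIV. ginv g y $ b $ c * ricci g y b c)" for b
    by (intro smooth_on_sum open_U sm1) auto
  have "pd a (scal g) x = (\<Sum>b\<in>UNIV. pd a (\<lambda>y. \<Sum>c\<in>UNIV. ginv g y $ b $ c * ricci g y b c) x)"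
    unfolding scal_def by (rule pd_sum) (auto intro: smooth_differentiable[OF sm2 x])
  also have "\<dots> = (\<Sum>b\<in>UNIV. \<Sum>c\<in>UNIV. pd a (\<lambda>y. ginv g y $ b $ c * ricci g y b c) x)"
    by (rule sum.cong[OF refl], rule pd_sum) (auto intro: smooth_differentiable[OF sm1 x])
  also have "\<dots> = (\<Sum>b\<in>UNIV. \<Sum>c\<in>UNIV. ginv g x $ b $ c * pd a (\<lambda>y. ricci g y b c) x
      + pd a (\<lambda>y. ginv g y $ b $ c) x * ricci g x b c)"
    by (intro sum.cong refl pd_mult smooth_differentiable[OF smooth_ginv x]
        smooth_differentiable[OF smooth_ricci x])
  also have "\<dots> = (\<Sum>b\<in>UNIV. \<Sum>c\<in>UNIV. ginv g x $ b $ c * cov2 g (ricci g) x a b c)"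
    unfolding pd_ginv[OF x] cov2_def by (simp only: sum_4; simp add: algebra_simps)
  finally show ?thesis .
qed

lemma contract_lowered:
  assumes x: "x \<in> U"
  shows "(\<Sum>j\<in>UNIV. \<Sum>d\<in>UNIV. ginv g x $ j $ d * (\<Sum>l\<in>UNIV. X j l * g x $ l $ d)) = (\<Sum>j\<in>UNIV. X j j)"
proof -
  have "(\<Sum>d\<in>UNIV. ginv g x $ j $ d * (\<Sum>l\<in>UNIV. X j l * g x $ l $ d))
      = (\<Sum>l\<in>UNIV. X j l * (\<Sum>d\<in>UNIV. ginv g x $ j $ d * g x $ l $ d))" for j
    by (simp add: sum_distrib_left sum_distrib_right mult_ac) (rule sum.swap)
  then show ?thesis by (simp add: ginv_metric_contract_last[OF x] delta_simps)
qed

lemma contract_metric_factor: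
  assumes x: "x \<in> U"
  shows "(\<Sum>j\<in>UNIV. \<Sum>d\<in>UNIV. ginv g x $ j $ d * (g x $ a $ d * Y j)) = Y a"
proof -
  have "(\<Sum>j\<in>UNIV. \<Sum>d\<in>UNIV. ginv g x $ j $ d * (g x $ a $ d * Y j))
      = (\<Sum>j\<in>UNIV. Y j * (\<Sum>d\<in>UNIV. ginv g x $ j $ d * g x $ a $ d))"
    by (simp add: sum_distrib_left sum_distrib_right mult_ac)
  then show ?thesis by (simp add: ginv_metric_contract_last[OF x] delta_simps)
qed

lemma trace_metric: "x \<in> U \<Longrightarrow> (\<Sum>b\<in>UNIV. \<Sum>c\<in>UNIV. ginv g x $ b $ c * g x $ b $ c) = 4"
  by (simp add: ginv_metric_contract_last)

lemma contract_divergence_form: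
  assumes x: "x \<in> U"
  shows "(\<Sum>j\<in>UNIV. \<Sum>d\<in>UNIV. ginv g x $ j $ d *
      ((\<Sum>l\<in>UNIV. N j l b c * g x $ l $ d) + 1/2 * kulkarni_nomizu g (\<lambda>_. S j) x a b c d
       - \<phi> j * const_curvature_tensor g x a b c d))
   = (\<Sum>j\<in>UNIV. N j j b c)
     + 1/2 * (S a b c + g x $ b $ c * (\<Sum>j\<in>UNIV. \<Sum>d\<in>UNIV. ginv g x $ j $ d * S j a d)
              - g x $ a $ c * (\<Sum>j\<in>UNIV. \<Sum>d\<in>UNIV. ginv g x $ j $ d * S j b d) - S b a c)
     - (\<phi> a * g x $ b $ c - g x $ a $ c * \<phi> b)"
proof -
  let ?h = "\<lambda>j d. ginv g x $ j $ d" and ?g = "\<lambda>j d. g x $ j $ d"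
  define B where "B a = (\<Sum>j\<in>UNIV. \<Sum>d\<in>UNIV. ?h j d * S j a d)" for a
  have "(\<Sum>j\<in>UNIV. \<Sum>d\<in>UNIV. ?h j d *
      ((\<Sum>l\<in>UNIV. N j l b c * ?g l d) + 1/2 * kulkarni_nomizu g (\<lambda>_. S j) x a b c d
       - \<phi> j * const_curvature_tensor g x a b c d))
     = (\<Sum>j\<in>UNIV. \<Sum>d\<in>UNIV. ?h j d * (\<Sum>l\<in>UNIV. N j l b c * ?g l d))
       + 1/2 * (\<Sum>j\<in>UNIV. \<Sum>d\<in>UNIV. ?h j d * (?g a d * S j b c))
       + 1/2 * ?g b c * B a - 1/2 * ?g a c * B b
       - 1/2 * (\<Sum>j\<in>UNIV. \<Sum>d\<in>UNIV. ?h j d * (?g b d * S j a c))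
       - ?g b c * (\<Sum>j\<in>UNIV. \<Sum>d\<in>UNIV. ?h j d * (?g a d * \<phi> j))
       + ?g a c * (\<Sum>j\<in>UNIV. \<Sum>d\<in>UNIV. ?h j d * (?g b d * \<phi> j))"
    unfolding B_def kulkarni_nomizu_def const_curvature_tensor_def
    by (simp only: sum_4; simp add: algebra_simps)
  then show ?thesis
    by (simp only: contract_lowered[OF x] contract_metric_factor[OF x]) (simp add: B_def algebra_simps)
qed

lemma contract_divergence_form_twice:
  assumes x: "x \<in> U"
  shows "(\<Sum>b\<in>UNIV. \<Sum>c\<in>UNIV. ginv g x $ b $ c * (\<Sum>j\<in>UNIV. \<Sum>d\<in>UNIV. ginv g x $ j $ d *
      ((\<Sum>l\<in>UNIV. N j l b c * g x $ l $ d) + 1/2 * kulkarni_nomizu g (\<lambda>_. S j) x a b c d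
       - \<phi> j * const_curvature_tensor g x a b c d)))
   = (\<Sum>b\<in>UNIV. \<Sum>c\<in>UNIV. ginv g x $ b $ c * (\<Sum>j\<in>UNIV. N j j b c))
     + 1/2 * (\<Sum>b\<in>UNIV. \<Sum>c\<in>UNIV. ginv g x $ b $ c * S a b c)
     + (\<Sum>b\<in>UNIV. \<Sum>c\<in>UNIV. ginv g x $ b $ c * S b a c) - 3 * \<phi> a"
proof -
  let ?h = "\<lambda>j d. ginv g x $ j $ d" and ?g = "\<lambda>j d. g x $ j $ d"
  define B where "B a = (\<Sum>j\<in>UNIV. \<Sum>d\<in>UNIV. ?h j d * S j a d)" for a
  have "(\<Sum>b\<in>UNIV. \<Sum>c\<in>UNIV. ?h b c * ((\<Sum>j\<in>UNIV. N j j b c)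
         + 1/2 * (S a b c + ?g b c * B a - ?g a c * B b - S b a c) - (\<phi> a * ?g b c - ?g a c * \<phi> b)))
     = (\<Sum>b\<in>UNIV. \<Sum>c\<in>UNIV. ?h b c * (\<Sum>j\<in>UNIV. N j j b c))
       + 1/2 * (\<Sum>b\<in>UNIV. \<Sum>c\<in>UNIV. ?h b c * S a b c)
       + 1/2 * B a * (\<Sum>b\<in>UNIV. \<Sum>c\<in>UNIV. ?h b c * ?g b c)
       - 1/2 * (\<Sum>b\<in>UNIV. \<Sum>c\<in>UNIV. ?h b c * (?g a c * B b))
       - 1/2 * (\<Sum>b\<in>UNIV. \<Sum>c\<in>UNIV. ?h b c * S b a c)
       - \<phi> a * (\<Sum>b\<in>UNIV. \<Sum>c\<in>UNIV. ?h b c * ?g b c)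
       + (\<Sum>b\<in>UNIV. \<Sum>c\<in>UNIV. ?h b c * (?g a c * \<phi> b))"
    by (simp only: sum_4; simp add: algebra_simps)
  also have "\<dots> = (\<Sum>b\<in>UNIV. \<Sum>c\<in>UNIV. ?h b c * (\<Sum>j\<in>UNIV. N j j b c))
     + 1/2 * (\<Sum>b\<in>UNIV. \<Sum>c\<in>UNIV. ?h b c * S a b c)
     + (\<Sum>b\<in>UNIV. \<Sum>c\<in>UNIV. ?h b c * S b a c) - 3 * \<phi> a"
    by (simp only: contract_metric_factor[OF x] trace_metric[OF x]) (simp add: B_def algebra_simps)
  finally show ?thesis
    unfolding contract_divergence_form[OF x] B_def .
qed

lemma divergence_free_contract:
  assumes x: "x \<in> U" and div: "divergence_free U g P"
  shows "(\<Sum>j\<in>UNIV. \<Sum>d\<in>UNIV. ginv g x $ j $ d * cov4 g P x j a b c d) = 0"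
proof -
  obtain e where e: "\<And>a b. (\<Sum>c\<in>UNIV. \<Sum>d\<in>UNIV. e a $ c * e b $ d * g x $ c $ d) = minkowski a b"
    using orthonormal_frame_exists[OF x] by blast
  then have e_gform: "gform g x (e a) (e b) = minkowski a b" for a b
    unfolding gform_def .
  then have "orthonormal_frame g x e"
    unfolding orthonormal_frame_def minkowski_def by auto
  then have "(\<Sum>i\<in>UNIV. gform g x (e i) (e i) *
      cov4_eval g P x (e i) (axis a 1) (axis b 1) (axis c 1) (e i)) = 0"
    using div x unfolding divergence_free_def by blast
  moreover have "cov4_eval g P x (e i) (axis a 1) (axis b 1) (axis c 1) (e i) =
     (\<Sum>j\<in>UNIV. \<Sum>d\<in>UNIV. e i $ j * e i $ d * cov4 g P x j a b c d)" for i
    unfolding cov4_eval_def axis_def by (simp add: delta_simps sum_if_zero mult_ac)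
  ultimately have frame_sum:
    "(\<Sum>i\<in>UNIV. minkowski i i * (\<Sum>j\<in>UNIV. \<Sum>d\<in>UNIV. e i $ j * e i $ d * cov4 g P x j a b c d)) = 0"
    unfolding e_gform by simp
  have "(\<Sum>j\<in>UNIV. \<Sum>d\<in>UNIV. ginv g x $ j $ d * cov4 g P x j a b c d)
     = (\<Sum>j\<in>UNIV. \<Sum>d\<in>UNIV. \<Sum>i\<in>UNIV. minkowski i i * (e i $ j * e i $ d * cov4 g P x j a b c d))"
    unfolding ginv_eq_frame_sum[OF x e] by (simp add: sum_distrib_left sum_distrib_right mult_ac)
  also have "\<dots> = (\<Sum>i\<in>UNIV. \<Sum>j\<in>UNIV. \<Sum>d\<in>UNIV. minkowski i i * (e i $ j * e i $ d * cov4 g P x j a b c d))"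
    by (rule sum_swap3[symmetric])
  also have "\<dots> = 0" using frame_sum by (simp add: sum_distrib_left)
  finally show ?thesis .
qed

lemma pd_energy_density_eq_0:
  assumes x: "x \<in> U" and \<sigma>: "smooth_on U \<sigma>"
    and Einstein: "\<forall>y\<in>U. \<forall>a b. ricci g y a b - scal g y / 2 * g y $ a $ b = \<kappa> * T y a b"
    and div: "divergence_free U g (space_matter g \<kappa> T \<sigma>)"
  shows "pd a \<sigma> x = 0"
proof -
  let ?h = "\<lambda>b c. ginv g x $ b $ c" and ?covRic = "cov2 g (ricci g) x"
  have "0 = (\<Sum>b\<in>UNIV. \<Sum>c\<in>UNIV. ?h b c *
      (\<Sum>j\<in>UNIV. \<Sum>d\<in>UNIV. ginv g x $ j $ d * cov4 g (space_matter g \<kappa> T \<sigma>) x j a b c d))"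
    by (simp add: divergence_free_contract[OF x div])
  also have "\<dots> = (\<Sum>b\<in>UNIV. \<Sum>c\<in>UNIV. ?h b c * (\<Sum>j\<in>UNIV. cov13 g (riem_up g) x j j a b c))
      + 1/2 * (\<Sum>b\<in>UNIV. \<Sum>c\<in>UNIV. ?h b c * ?covRic a b c)
      + (\<Sum>b\<in>UNIV. \<Sum>c\<in>UNIV. ?h b c * ?covRic b a c) - 3 * pd a (\<lambda>y. scal g y / 2 + \<sigma> y) x"
    unfolding cov4_space_matter[OF x \<sigma> Einstein] by (rule contract_divergence_form_twice[OF x])
  also have "\<dots> = 3/2 * pd a (scal g) x - 3 * pd a (\<lambda>y. scal g y / 2 + \<sigma> y) x"
    unfolding pd_scal[OF x] contracted_bianchi[OF x]
    by (simp add: right_diff_distrib sum_subtractf)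
  also have "pd a (\<lambda>y. scal g y / 2 + \<sigma> y) x = pd a (scal g) x / 2 + pd a \<sigma> x"
    using smooth_differentiable[OF smooth_scal x] smooth_differentiable[OF \<sigma> x]
    by (simp add: pd_add pd_divide_const)
  finally show ?thesis by simp
qed

end

theorem mainTheorem6:
  fixes U :: "pt set" and g :: "pt \<Rightarrow> real^4^4"
    and \<Psi>1 \<Psi>2 \<Psi>3 \<Psi>4 \<Psi>5 :: "pt \<Rightarrow> real" and \<xi>1 \<xi>2 :: "pt \<Rightarrow> real^4"
    and D T :: "pt \<Rightarrow> 4 \<Rightarrow> 4 \<Rightarrow> real" and \<sigma> :: "pt \<Rightarrow> real" and \<kappa> :: real
  assumes "open U" and "connected U"
    and "msqe U g \<Psi>1 \<Psi>2 \<Psi>3 \<Psi>4 \<Psi>5 \<xi>1 \<xi>2 D"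
    and "\<kappa> \<noteq> 0"
    and "\<forall>x\<in>U. \<forall>a b. ricci g x a b - scal g x / 2 * g x $ a $ b = \<kappa> * T x a b"
    and "smooth_on U \<sigma>"
    and "divergence_free U g (space_matter g \<kappa> T \<sigma>)"
  shows "\<exists>c. \<forall>x\<in>U. \<sigma> x = c"
proof -
  interpret lorentzian_chart U g
    using assms(1,3) by unfold_locales (simp_all add: msqe_def)
  show ?thesis
  proof (rule pd_zero_imp_constant[OF assms(1,2)])
    show "continuous_on U \<sigma>" using smooth_on_continuous_on[OF assms(6)] .
    show "\<sigma> differentiable (at x)" if "x \<in> U" for x using smooth_differentiable[OF assms(6) that] .
    show "pd i \<sigma> x = 0" if "x \<in> U" for x i using pd_energy_density_eq_0[OF that assms(6,5,7)] .
  qed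
qed

end
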